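(* In $\mathbf{Sol}$ there exist geodesic triangles whose interior angle sum is larger than $\pi$, geodesic triangles whose interior angle sum is less than $\pi$, and geodesic triangles whose interior angle sum equals $\pi$.
   Context: $\mathbf{Sol}$ is $\mathbb{R}^3$ with coordinates $(x,y,z)$, with group law $(a,b,c)(x,y,z)=(x+ae^{-z},\,y+be^{z},\,z+c)$ and left-invariant Riemannian metric $ds^2=e^{2z}dx^2+e^{-2z}dy^2+dz^2$. A geodesic triangle consists of three points not on a common geodesic (vertices) and geodesic segments (sides) joining them pairwise; the interior angle at a vertex is the angle, measured with the Riemannian metric at that vertex, between the initial tangent vectors of the two sides issuing from that vertex. *)

theory Defs
  imports "HOL-Analysis.Analysis"
begin

type_synonym R3 = "real \<times> real \<times> real"

definition sol_inner :: "R3 \<Rightarrow> R3 \<Rightarrow> R3 \<Rightarrow> real" where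
  "sol_inner p v w =
     (case p of (x, y, z) \<Rightarrow> case v of (v1, v2, v3) \<Rightarrow> case w of (w1, w2, w3) \<Rightarrow>
        exp (2 * z) * v1 * w1 + exp (- 2 * z) * v2 * w2 + v3 * w3)"

text \<open>Geodesic equations of the metric (Euler-Lagrange / Levi-Civita):
  x'' = -2 z' x',  y'' = 2 z' y',  z'' = e^(2z) x'^2 - e^(-2z) y'^2.\<close>
definition sol_geodesic_acc :: "R3 \<Rightarrow> R3 \<Rightarrow> R3" where
  "sol_geodesic_acc p v =
     (case p of (x, y, z) \<Rightarrow> case v of (v1, v2, v3) \<Rightarrow>
        (- 2 * v1 * v3, 2 * v2 * v3, exp (2 * z) * v1 ^ 2 - exp (- 2 * z) * v2 ^ 2))"

definition sol_geodesic_on :: "(real \<Rightarrow> R3) \<Rightarrow> real \<Rightarrow> real \<Rightarrow> bool" where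
  "sol_geodesic_on c a b \<longleftrightarrow> a < b \<and>
     (\<exists>c' c''. \<forall>t\<in>{a..b}.
        (c has_vector_derivative c' t) (at t within {a..b}) \<and>
        (c' has_vector_derivative c'' t) (at t within {a..b}) \<and>
        c'' t = sol_geodesic_acc (c t) (c' t))"

definition sol_on_common_geodesic :: "R3 \<Rightarrow> R3 \<Rightarrow> R3 \<Rightarrow> bool" where
  "sol_on_common_geodesic A B C \<longleftrightarrow>
     (\<exists>c a b. sol_geodesic_on c a b \<and> A \<in> c ` {a..b} \<and> B \<in> c ` {a..b} \<and> C \<in> c ` {a..b})"

definition sol_angle :: "R3 \<Rightarrow> R3 \<Rightarrow> R3 \<Rightarrow> real" where
  "sol_angle p v w =
     arccos (sol_inner p v w / (sqrt (sol_inner p v v) * sqrt (sol_inner p w w)))"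

definition side_tangent :: "(real \<Rightarrow> R3) \<Rightarrow> real \<Rightarrow> R3" where
  "side_tangent g t = vector_derivative g (at t within {0..1})"

definition sol_geodesic_triangle ::
  "R3 \<Rightarrow> R3 \<Rightarrow> R3 \<Rightarrow> (real \<Rightarrow> R3) \<Rightarrow> (real \<Rightarrow> R3) \<Rightarrow> (real \<Rightarrow> R3) \<Rightarrow> bool" where
  "sol_geodesic_triangle A B C g1 g2 g3 \<longleftrightarrow>
     distinct [A, B, C] \<and> \<not> sol_on_common_geodesic A B C \<and>
     sol_geodesic_on g1 0 1 \<and> g1 0 = A \<and> g1 1 = B \<and>
     sol_geodesic_on g2 0 1 \<and> g2 0 = B \<and> g2 1 = C \<and>
     sol_geodesic_on g3 0 1 \<and> g3 0 = C \<and> g3 1 = A"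

text \<open>Sum of interior angles: at each vertex, the angle between the initial tangent
  vectors of the two sides issuing from it (a side ending at the vertex is traversed backwards).\<close>
definition sol_angle_sum ::
  "R3 \<Rightarrow> R3 \<Rightarrow> R3 \<Rightarrow> (real \<Rightarrow> R3) \<Rightarrow> (real \<Rightarrow> R3) \<Rightarrow> (real \<Rightarrow> R3) \<Rightarrow> real" where
  "sol_angle_sum A B C g1 g2 g3 =
     sol_angle A (side_tangent g1 0) (- side_tangent g3 1) +
     sol_angle B (side_tangent g2 0) (- side_tangent g1 1) +
     sol_angle C (side_tangent g3 0) (- side_tangent g2 1)"

end

theory Submission
  imports Defs
begin

text \<open>
  For \<open>t > 0\<close> take the vertices \<open>A = (0,0,0)\<close>, \<open>B = (1,1,0)\<close>, \<open>C = (0,1,(ln t)/2)\<close>.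
  The side \<open>AB\<close> is the straight line \<open>x = y\<close> in the plane \<open>z = 0\<close>.  The sides \<open>BC\<close> and
  \<open>CA\<close> lie in the vertical planes \<open>y = 1\<close> and \<open>x = 0\<close>; substituting \<open>w = e\<^sup>\<mp>\<^sup>z\<close> turns
  each of these planes into the hyperbolic upper half-plane, so these sides are explicit
  semicircle arcs with explicit initial tangents.  The triangle is non-degenerate because
  \<open>e\<^sup>2\<^sup>z x'\<close> is constant along every geodesic: a geodesic meeting the plane \<open>x = 0\<close> twice
  stays in it, while \<open>B\<close> does not lie in it.

  Computing the three angles, the sign of (angle sum \<open>- \<pi>\<close>) turns out to be the opposite of
  the sign of \<open>t\<^sup>4 - 6t\<^sup>3 + 6t\<^sup>2 - 6t + 1\<close>, which is negative at \<open>t = 1\<close>, positive at \<open>t = 6\<close>,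
  and hence vanishes somewhere in between.
\<close>

section \<open>Geodesics in vertical planes\<close>

lemma side_tangent_eqI:
  assumes "(g has_vector_derivative v) (at t within {0..1})" and "t \<in> {0..1}"
  shows "side_tangent g t = v"
  unfolding side_tangent_def using assms by (simp add: vector_derivative_within_closed_interval)

lemma has_vector_derivative_triple:
  fixes X Y Z :: "real \<Rightarrow> real"
  assumes "(X has_real_derivative X') (at t within S)" "(Y has_real_derivative Y') (at t within S)"
    and "(Z has_real_derivative Z') (at t within S)"
  shows "((\<lambda>t. (X t, Y t, Z t)) has_vector_derivative (X', Y', Z')) (at t within S)"
  using assms by (simp add: has_real_derivative_iff_has_vector_derivative has_vector_derivative_Pair)

lemma sol_geodesic_onI:
  assumes "a < b"
    and "\<And>t. (c has_vector_derivative c' t) (at t)"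
    and "\<And>t. (c' has_vector_derivative c'' t) (at t)"
    and "\<And>t. c'' t = sol_geodesic_acc (c t) (c' t)"
  shows "sol_geodesic_on c a b"
  unfolding sol_geodesic_on_def using assms by (blast intro: has_vector_derivative_at_within)

text \<open>
  In the plane \<open>y = const\<close> the substitution \<open>w = e\<^sup>-\<^sup>z\<close> gives the metric \<open>(dx\<^sup>2 + dw\<^sup>2) / w\<^sup>2\<close>;
  the curve below is the semicircle \<open>(x - xc)\<^sup>2 + w\<^sup>2 = R\<^sup>2\<close>, \<open>x = xc + R tanh s\<close>,
  \<open>w = R sech s\<close>, traversed with constant hyperbolic speed \<open>d\<close>.
\<close>
lemma sol_geodesic_on_xz_arc:
  fixes xc y R s d :: real
  assumes "R > 0"
  defines "curve \<equiv> \<lambda>s. (xc + R * tanh s, y, - ln R - ln (1 - tanh s ^ 2) / 2)"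
    and "velocity \<equiv> \<lambda>s. (R * (1 - tanh s ^ 2), 0::real, tanh s)"
  shows "sol_geodesic_on (\<lambda>t. curve (s + d * t)) 0 1"
    and "side_tangent (\<lambda>t. curve (s + d * t)) 0 = d *\<^sub>R velocity s"
    and "side_tangent (\<lambda>t. curve (s + d * t)) 1 = d *\<^sub>R velocity (s + d)"
proof -
  define T where "T t = tanh (s + d * t)" for t
  define c' :: "real \<Rightarrow> R3" where "c' t = (R * d * (1 - T t ^ 2), 0, d * T t)" for t
  define c'' :: "real \<Rightarrow> R3" where "c'' t = (- 2 * R * d^2 * T t * (1 - T t ^ 2), 0, d^2 * (1 - T t ^ 2))" for t
  have sech2_pos: "1 - T t ^ 2 > 0" for t
    using tanh_real_bounds[of "s + d * t"] by (simp add: T_def abs_square_less_1 abs_less_iff)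
  have dT: "(T has_real_derivative d * (1 - T t ^ 2)) (at t)" for t
    unfolding T_def by (auto intro!: derivative_eq_intros simp: algebra_simps)
  have curve_eq: "(\<lambda>t. curve (s + d * t)) = (\<lambda>t. (xc + R * T t, y, - ln R - ln (1 - T t ^ 2) / 2))"
    by (simp add: curve_def T_def)
  have dx: "((\<lambda>t. xc + R * T t) has_real_derivative R * d * (1 - T t ^ 2)) (at t)" for t
    by (auto intro!: derivative_eq_intros dT simp: algebra_simps)
  have dz: "((\<lambda>t. - ln R - ln (1 - T t ^ 2) / 2) has_real_derivative d * T t) (at t)" for t
    using sech2_pos[of t] by (auto intro!: derivative_eq_intros dT simp: field_simps power2_eq_square)
  have dc: "((\<lambda>t. curve (s + d * t)) has_vector_derivative c' t) (at t within S)" for t S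
    unfolding curve_eq c'_def
    by (rule has_vector_derivative_triple; rule has_field_derivative_at_within; rule dx dz DERIV_const)
  have dc': "(c' has_vector_derivative c'' t) (at t)" for t
    unfolding c'_def c''_def
    by (intro has_vector_derivative_triple) (auto intro!: derivative_eq_intros dT simp: algebra_simps power2_eq_square)
  have exp_z: "exp (2 * (- ln R - ln (1 - T t ^ 2) / 2)) = 1 / (R^2 * (1 - T t ^ 2))" for t
  proof -
    have "exp (2 * (- ln R - ln (1 - T t ^ 2) / 2)) = inverse (exp (ln R) * exp (ln R) * exp (ln (1 - T t ^ 2)))"
      by (simp add: exp_minus[symmetric] exp_add[symmetric] algebra_simps)
    then show ?thesis
      using sech2_pos[of t] \<open>R > 0\<close> by (simp add: power2_eq_square field_simps)
  qed
  have acc: "c'' t = sol_geodesic_acc (curve (s + d * t)) (c' t)" for t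
  proof -
    have "exp (2 * (- ln R - ln (1 - T t ^ 2) / 2)) * (R * d * (1 - T t ^ 2))^2 = d^2 * (1 - T t ^ 2)"
      unfolding exp_z using sech2_pos[of t] \<open>R > 0\<close> by (simp add: field_simps power2_eq_square)
    then show ?thesis
      unfolding curve_def c'_def c''_def sol_geodesic_acc_def T_def by (simp add: algebra_simps power2_eq_square)
  qed
  show "sol_geodesic_on (\<lambda>t. curve (s + d * t)) 0 1"
    by (rule sol_geodesic_onI[OF _ dc dc' acc]) simp
  show "side_tangent (\<lambda>t. curve (s + d * t)) 0 = d *\<^sub>R velocity s"
    and "side_tangent (\<lambda>t. curve (s + d * t)) 1 = d *\<^sub>R velocity (s + d)"
    using side_tangent_eqI[OF dc, of 0] side_tangent_eqI[OF dc, of 1]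
    by (simp_all add: c'_def velocity_def T_def)
qed

lemma tanh_artanh_real:
  fixes y :: real
  assumes "\<bar>y\<bar> < 1"
  shows "tanh (artanh y) = y"
proof -
  have pos: "0 < 1 - y" "0 < 1 + y" using assms by (simp_all add: abs_less_iff)
  define Q where "Q = (1 + y) / (1 - y)"
  have "Q > 0" unfolding Q_def using pos by simp
  then have "exp (- 2 * artanh y) = 1 / Q"
    unfolding artanh_def Q_def[symmetric] by (simp add: exp_minus inverse_eq_divide)
  then have "tanh (artanh y) = (1 - 1 / Q) / (1 + 1 / Q)" by (simp add: tanh_real_altdef)
  also have "\<dots> = y" unfolding Q_def using pos by (simp add: field_simps)
  finally show ?thesis .
qed

lemma hyperbolic_arc_endpoint:
  fixes q z :: real
  assumes R: "R = sqrt (q^2 + exp (-2 * z))"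
  defines "s \<equiv> artanh (q / R)"
  shows "R > 0"
    and "tanh s = q / R"
    and "- ln R - ln (1 - tanh s ^ 2) / 2 = z"
    and "(R * (1 - tanh s ^ 2), 0, tanh s) = (1 / R) *\<^sub>R (exp (-2 * z), 0, q)"
proof -
  have R2: "R^2 = q^2 + exp (-2 * z)" unfolding R by (simp add: add_nonneg_pos)
  show "R > 0" unfolding R by (simp add: add_nonneg_pos)
  have "\<bar>q\<bar> < R"
    using power2_less_imp_less[of "\<bar>q\<bar>" R] R2 \<open>R > 0\<close> by simp
  with \<open>R > 0\<close> have "\<bar>q / R\<bar> < 1" by simp
  then show tanh: "tanh s = q / R" unfolding s_def by (rule tanh_artanh_real)
  have "1 - (q / R) ^ 2 = (R^2 - q^2) / R^2" using \<open>R > 0\<close> by (simp add: power_divide diff_divide_distrib)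
  then have sech2: "1 - tanh s ^ 2 = exp (-2 * z) / R^2" unfolding tanh R2 by simp
  have "ln (exp (-2 * z) / R^2) = -2 * z - 2 * ln R"
    using \<open>R > 0\<close> by (simp add: ln_div ln_realpow)
  then show "- ln R - ln (1 - tanh s ^ 2) / 2 = z"
    unfolding sech2 by (simp add: field_simps)
  show "(R * (1 - tanh s ^ 2), 0, tanh s) = (1 / R) *\<^sub>R (exp (-2 * z), 0, q)"
    unfolding sech2 using \<open>R > 0\<close> by (simp add: tanh power2_eq_square)
qed

lemma sol_geodesic_through_xz:
  fixes x0 x1 xc y z0 z1 :: real
  assumes "x0 \<noteq> x1" and "(x0 - xc)^2 + exp (-2 * z0) = (x1 - xc)^2 + exp (-2 * z1)"
  obtains g k where "sol_geodesic_on g 0 1" "g 0 = (x0, y, z0)" "g 1 = (x1, y, z1)" "k > 0"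
    "side_tangent g 0 = k *\<^sub>R ((x1 - x0) * exp (-2 * z0), 0, (x1 - x0) * (x0 - xc))"
    "side_tangent g 1 = k *\<^sub>R ((x1 - x0) * exp (-2 * z1), 0, (x1 - x0) * (x1 - xc))"
proof -
  define R where "R = sqrt ((x0 - xc)^2 + exp (-2 * z0))"
  have R1: "R = sqrt ((x1 - xc)^2 + exp (-2 * z1))" unfolding R_def assms(2) ..
  note E0 = hyperbolic_arc_endpoint[OF R_def] and E1 = hyperbolic_arc_endpoint[OF R1]
  have "R > 0" by (fact E0(1))
  define s0 where "s0 = artanh ((x0 - xc) / R)"
  define d where "d = artanh ((x1 - xc) / R) - s0"
  have s1: "artanh ((x1 - xc) / R) = s0 + d" by (simp add: d_def)
  note E0 = E0[folded s0_def] and E1 = E1[unfolded s1]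
  have "d * (x1 - x0) > 0"
  proof -
    have "x1 - x0 = R * (tanh (s0 + d) - tanh s0)"
      unfolding E0(2) E1(2) using \<open>R > 0\<close> by (simp add: field_simps)
    then show ?thesis
      using \<open>R > 0\<close> assms(1)
      by (cases "d > 0") (auto simp: zero_less_mult_iff mult_less_0_iff not_less le_less)
  qed
  define k where "k = d / (R * (x1 - x0))"
  have "k > 0" unfolding k_def using \<open>d * (x1 - x0) > 0\<close> \<open>R > 0\<close>
    by (auto simp: zero_less_divide_iff zero_less_mult_iff mult_less_0_iff)
  define g where "g t = (xc + R * tanh (s0 + d * t), y, - ln R - ln (1 - tanh (s0 + d * t) ^ 2) / 2)" for t
  note arc = sol_geodesic_on_xz_arc[OF \<open>R > 0\<close>, where xc=xc and y=y and s=s0 and d=d, folded g_def]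
  show thesis
  proof (rule that[OF arc(1) _ _ \<open>k > 0\<close>])
    have "xc + R * tanh s0 = x0" "xc + R * tanh (s0 + d) = x1"
      using \<open>R > 0\<close> by (simp_all add: E0(2) E1(2))
    then show "g 0 = (x0, y, z0)" "g 1 = (x1, y, z1)" by (simp_all add: g_def E0(3) E1(3))
    show "side_tangent g 0 = k *\<^sub>R ((x1 - x0) * exp (-2 * z0), 0, (x1 - x0) * (x0 - xc))"
      unfolding arc(2) E0(4) using \<open>R > 0\<close> assms(1) by (simp add: k_def field_simps)
    show "side_tangent g 1 = k *\<^sub>R ((x1 - x0) * exp (-2 * z1), 0, (x1 - x0) * (x1 - xc))"
      unfolding arc(3) E1(4) using \<open>R > 0\<close> assms(1) by (simp add: k_def field_simps)
  qed
qed

text \<open>An isometry of Sol exchanging the planes \<open>x = const\<close> and \<open>y = const\<close>.\<close>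
definition sol_flip :: "R3 \<Rightarrow> R3" where
  "sol_flip = (\<lambda>(x, y, z). (y, x, - z))"

lemma sol_flip_simp [simp]: "sol_flip (x, y, z) = (y, x, - z)"
  by (simp add: sol_flip_def)

lemma bounded_linear_sol_flip: "bounded_linear sol_flip"
  unfolding linear_conv_bounded_linear[symmetric] linear_iff
  by (auto simp: sol_flip_def split: prod.splits)

lemma sol_geodesic_acc_flip: "sol_geodesic_acc (sol_flip p) (sol_flip v) = sol_flip (sol_geodesic_acc p v)"
  by (cases p; cases v) (simp add: sol_geodesic_acc_def)

lemma sol_geodesic_on_flip:
  assumes "sol_geodesic_on c a b"
  shows "sol_geodesic_on (sol_flip \<circ> c) a b"
proof -
  obtain c' c'' where "a < b" and c: "\<forall>t\<in>{a..b}.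
      (c has_vector_derivative c' t) (at t within {a..b}) \<and>
      (c' has_vector_derivative c'' t) (at t within {a..b}) \<and>
      c'' t = sol_geodesic_acc (c t) (c' t)"
    using assms unfolding sol_geodesic_on_def by blast
  note flip_deriv = bounded_linear.has_vector_derivative[OF bounded_linear_sol_flip]
  show ?thesis
    unfolding sol_geodesic_on_def
  proof (intro conjI exI ballI)
    fix t assume "t \<in> {a..b}"
    then have "(c has_vector_derivative c' t) (at t within {a..b})"
      and "(c' has_vector_derivative c'' t) (at t within {a..b})"
      and acc: "c'' t = sol_geodesic_acc (c t) (c' t)"
      using c by blast+
    then show "(sol_flip \<circ> c has_vector_derivative sol_flip (c' t)) (at t within {a..b})"
      and "((\<lambda>t. sol_flip (c' t)) has_vector_derivative sol_flip (c'' t)) (at t within {a..b})"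
      and "sol_flip (c'' t) = sol_geodesic_acc ((sol_flip \<circ> c) t) (sol_flip (c' t))"
      by (simp_all add: o_def flip_deriv sol_geodesic_acc_flip)
  qed (fact \<open>a < b\<close>)
qed

lemma side_tangent_flip:
  assumes "sol_geodesic_on g 0 1" and "t \<in> {0..1}"
  shows "side_tangent (sol_flip \<circ> g) t = sol_flip (side_tangent g t)"
proof -
  obtain g' where "(g has_vector_derivative g') (at t within {0..1})"
    using assms unfolding sol_geodesic_on_def by blast
  then show ?thesis
    using bounded_linear.has_vector_derivative[OF bounded_linear_sol_flip] assms(2)
    by (simp add: side_tangent_eqI o_def)
qed

lemma sol_geodesic_through_yz:
  fixes x y0 y1 yc z0 z1 :: real
  assumes "y0 \<noteq> y1" and "(y0 - yc)^2 + exp (2 * z0) = (y1 - yc)^2 + exp (2 * z1)"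
  obtains g k where "sol_geodesic_on g 0 1" "g 0 = (x, y0, z0)" "g 1 = (x, y1, z1)" "k > 0"
    "side_tangent g 0 = k *\<^sub>R (0, (y1 - y0) * exp (2 * z0), (y1 - y0) * (yc - y0))"
    "side_tangent g 1 = k *\<^sub>R (0, (y1 - y0) * exp (2 * z1), (y1 - y0) * (yc - y1))"
proof -
  obtain g k where g: "sol_geodesic_on g 0 1" "g 0 = (y0, x, - z0)" "g 1 = (y1, x, - z1)" "k > 0"
    "side_tangent g 0 = k *\<^sub>R ((y1 - y0) * exp (2 * z0), 0, (y1 - y0) * (y0 - yc))"
    "side_tangent g 1 = k *\<^sub>R ((y1 - y0) * exp (2 * z1), 0, (y1 - y0) * (y1 - yc))"
    using sol_geodesic_through_xz[of y0 y1 yc "- z0" "- z1" x] assms by auto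
  show thesis
  proof (rule that[OF sol_geodesic_on_flip[OF g(1)] _ _ \<open>k > 0\<close>])
    show "(sol_flip \<circ> g) 0 = (x, y0, z0)" "(sol_flip \<circ> g) 1 = (x, y1, z1)"
      by (simp_all add: g(2,3))
    show "side_tangent (sol_flip \<circ> g) 0 = k *\<^sub>R (0, (y1 - y0) * exp (2 * z0), (y1 - y0) * (yc - y0))"
      and "side_tangent (sol_flip \<circ> g) 1 = k *\<^sub>R (0, (y1 - y0) * exp (2 * z1), (y1 - y0) * (yc - y1))"
      by (simp_all add: side_tangent_flip[OF g(1)] g(5,6) algebra_simps)
  qed
qed

section \<open>A non-degeneracy criterion\<close>

lemma has_real_derivative_R3_components:
  fixes c :: "real \<Rightarrow> R3"
  assumes "(c has_vector_derivative v) F"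
  shows "((\<lambda>t. fst (c t)) has_real_derivative fst v) F"
    and "((\<lambda>t. snd (snd (c t))) has_real_derivative snd (snd v)) F"
  using bounded_linear.has_vector_derivative[OF bounded_linear_fst assms]
    bounded_linear.has_vector_derivative[OF bounded_linear_snd
      bounded_linear.has_vector_derivative[OF bounded_linear_snd assms]]
  by (simp_all add: has_real_derivative_iff_has_vector_derivative)

lemma fst_sol_geodesic_acc: "fst (sol_geodesic_acc p v) = - 2 * fst v * snd (snd v)"
  by (cases p; cases v) (simp add: sol_geodesic_acc_def)

lemma sol_geodesic_x_momentum_constant:
  assumes "\<forall>t\<in>{a..b}. (c has_vector_derivative c' t) (at t within {a..b}) \<and>
      (c' has_vector_derivative c'' t) (at t within {a..b}) \<and> c'' t = sol_geodesic_acc (c t) (c' t)"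
  shows "\<exists>K. \<forall>t\<in>{a..b}. exp (2 * snd (snd (c t))) * fst (c' t) = K"
proof (rule has_field_derivative_zero_constant)
  fix t assume "t \<in> {a..b}"
  with assms have dc: "(c has_vector_derivative c' t) (at t within {a..b})"
    and dc': "(c' has_vector_derivative c'' t) (at t within {a..b})"
    and "c'' t = sol_geodesic_acc (c t) (c' t)"
    by blast+
  then have acc: "fst (c'' t) = - 2 * fst (c' t) * snd (snd (c' t))"
    by (simp add: fst_sol_geodesic_acc)
  have "((\<lambda>t. exp (2 * snd (snd (c t))) * fst (c' t)) has_real_derivative
      exp (2 * snd (snd (c t))) * (2 * snd (snd (c' t))) * fst (c' t) + exp (2 * snd (snd (c t))) * fst (c'' t))
      (at t within {a..b})"
    by (auto intro!: derivative_eq_intros has_real_derivative_R3_components[OF dc]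
        has_real_derivative_R3_components[OF dc'])
  then show "((\<lambda>t. exp (2 * snd (snd (c t))) * fst (c' t)) has_real_derivative 0) (at t within {a..b})"
    by (simp add: acc algebra_simps)
qed simp

lemma sol_geodesic_fst_constant:
  assumes "sol_geodesic_on c a b" and "s \<in> {a..b}" "u \<in> {a..b}" "s \<noteq> u" "fst (c s) = fst (c u)"
    and "r \<in> {a..b}"
  shows "fst (c r) = fst (c s)"
proof -
  obtain c' c'' where c: "\<forall>t\<in>{a..b}. (c has_vector_derivative c' t) (at t within {a..b}) \<and>
      (c' has_vector_derivative c'' t) (at t within {a..b}) \<and> c'' t = sol_geodesic_acc (c t) (c' t)"
    using assms(1) unfolding sol_geodesic_on_def by blast
  obtain K where K: "\<And>t. t \<in> {a..b} \<Longrightarrow> exp (2 * snd (snd (c t))) * fst (c' t) = K"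
    using sol_geodesic_x_momentum_constant[OF c] by blast
  define X where "X t = fst (c t)" for t
  have dX: "(X has_real_derivative fst (c' t)) (at t within {a..b})" if "t \<in> {a..b}" for t
    unfolding X_def using c that by (blast intro: has_real_derivative_R3_components)
  have "\<exists>r. min s u < r \<and> r < max s u \<and> (\<lambda>h. fst (c' r) * h) = (\<lambda>h. 0)"
  proof (rule Rolle_deriv)
    show "min s u < max s u" "X (min s u) = X (max s u)"
      using assms(4,5) by (auto simp: X_def min_def max_def)
    have "continuous_on {a..b} X"
      using dX by (meson DERIV_continuous continuous_on_eq_continuous_within)
    then show "continuous_on {min s u..max s u} X"
      by (rule continuous_on_subset) (use assms(2,3) in auto)
    fix r assume "min s u < r" "r < max s u"
    then have "a < r" "r < b" using assms(2,3) by auto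
    then show "(X has_derivative (\<lambda>h. fst (c' r) * h)) (at r)"
      using dX[of r] at_within_Icc_at[of a r b] by (simp add: has_field_derivative_def)
  qed
  then obtain r0 where r0: "min s u < r0" "r0 < max s u" "(\<lambda>h. fst (c' r0) * h) = (\<lambda>h. 0)"
    by blast
  then have "r0 \<in> {a..b}" using assms(2,3) by auto
  moreover have "fst (c' r0) = 0" using fun_cong[OF r0(3), of 1] by simp
  ultimately have "K = 0" using K by force
  then have "(X has_real_derivative 0) (at t within {a..b})" if "t \<in> {a..b}" for t
    using dX[OF that] K[OF that] by simp
  then obtain L where "\<forall>t\<in>{a..b}. X t = L"
    using has_field_derivative_zero_constant[of "{a..b}" X] by auto
  then show ?thesis using assms(2,6) by (simp add: X_def)
qed

lemma not_sol_on_common_geodesic: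
  assumes "fst A = fst C" "A \<noteq> C" "fst B \<noteq> fst A"
  shows "\<not> sol_on_common_geodesic A B C"
proof
  assume "sol_on_common_geodesic A B C"
  then obtain c a b tA tB tC where c: "sol_geodesic_on c a b"
    and t: "tA \<in> {a..b}" "tB \<in> {a..b}" "tC \<in> {a..b}" and "A = c tA" "B = c tB" "C = c tC"
    unfolding sol_on_common_geodesic_def by blast
  with assms have "tA \<noteq> tC" "fst (c tA) = fst (c tC)" "fst (c tB) \<noteq> fst (c tA)" by auto
  with sol_geodesic_fst_constant[OF c t(1,3)] t(2) show False by blast
qed

section \<open>Angle sums\<close>

lemma sgn_diff_eq_sgn_cos_diff:
  fixes x y :: real
  assumes "0 \<le> x" "x \<le> pi" "0 \<le> y" "y \<le> pi"
  shows "sgn (x - y) = sgn (cos y - cos x)"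
  using cos_mono_less_eq[OF assms] cos_mono_less_eq[OF assms(3,4,1,2)] cos_inj_pi[OF assms]
  by (cases x y rule: linorder_cases) (auto simp: sgn_if)

lemma sgn_arccos_sum_minus_pi:
  fixes a b c :: real
  assumes "0 \<le> a" "a \<le> 1" "0 \<le> b" "b \<le> 1" "-1 \<le> c" "c \<le> 1"
  shows "sgn (arccos a + arccos b + arccos c - pi) = sgn (sqrt (1 - a^2) * sqrt (1 - b^2) - a * b - c)"
proof -
  define \<delta> where "\<delta> = pi - (arccos a + arccos b)"
  have "0 \<le> arccos a" "arccos a \<le> pi/2" "0 \<le> arccos b" "arccos b \<le> pi/2"
    using assms arccos_le_pi2[of a] arccos_le_pi2[of b] arccos_lbound[of a] arccos_lbound[of b] by auto
  then have "0 \<le> \<delta>" "\<delta> \<le> pi" by (auto simp: \<delta>_def)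
  have "cos \<delta> = sin (arccos a) * sin (arccos b) - cos (arccos a) * cos (arccos b)"
    by (simp add: \<delta>_def cos_add)
  also have "\<dots> = sqrt (1 - a^2) * sqrt (1 - b^2) - a * b"
    using assms by (simp add: sin_arccos)
  finally have cos_\<delta>: "cos \<delta> = sqrt (1 - a^2) * sqrt (1 - b^2) - a * b" .
  have "sgn (arccos a + arccos b + arccos c - pi) = sgn (arccos c - \<delta>)"
    by (simp add: \<delta>_def algebra_simps)
  also have "\<dots> = sgn (cos \<delta> - cos (arccos c))"
    using \<open>0 \<le> \<delta>\<close> \<open>\<delta> \<le> pi\<close> assms(5,6) by (intro sgn_diff_eq_sgn_cos_diff arccos_lbound arccos_ubound)
  finally show ?thesis using assms(5,6) by (simp add: cos_\<delta>)
qed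

lemma sgn_sqrt_diff:
  fixes x K :: real
  assumes "0 \<le> x" "0 < K"
  shows "sgn (sqrt x - K) = sgn (x - K^2)"
proof -
  have "sgn (sqrt x - K) = sgn ((sqrt x - K) * (sqrt x + K))"
    using assms by (simp add: sgn_mult add_nonneg_pos)
  also have "(sqrt x - K) * (sqrt x + K) = x - K^2"
    using assms by (simp add: algebra_simps power2_eq_square[symmetric])
  finally show ?thesis .
qed

definition angle_excess_poly :: "real \<Rightarrow> real" where
  "angle_excess_poly t = t^4 - 6 * t^3 + 6 * t^2 - 6 * t + 1"

lemma sgn_triangle_angle_sum:
  fixes t :: real
  assumes "t > 0"
  defines "u \<equiv> sqrt (4 + t^2)" and "v \<equiv> sqrt (4 * t^2 + 1)"
  shows "sgn (arccos (2 / (sqrt 2 * u)) + arccos (2 * t / (v * sqrt 2))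
              + arccos ((2 - t) * (1 - 2 * t) / (u * v)) - pi) = - sgn (angle_excess_poly t)"
proof -
  define a where "a = 2 / (sqrt 2 * u)"
  define b where "b = 2 * t / (v * sqrt 2)"
  define c where "c = (2 - t) * (1 - 2 * t) / (u * v)"
  have "u > 0" "v > 0" "u^2 = 4 + t^2" "v^2 = 4 * t^2 + 1"
    by (simp_all add: u_def v_def add_pos_nonneg add_nonneg_pos)
  have a2: "a^2 = 2 / u^2" and b2: "b^2 = 2 * t^2 / v^2"
    by (simp_all add: a_def b_def power_divide power_mult_distrib)
  have "a^2 \<le> 1" "b^2 \<le> 1"
    using \<open>u^2 = _\<close> \<open>v^2 = _\<close> by (simp_all add: a2 b2 divide_le_eq_1 add_pos_nonneg add_nonneg_pos)
  moreover have "c^2 \<le> 1"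
  proof -
    have "((2 - t) * (1 - 2 * t))^2 \<le> (4 + t^2) * (4 * t^2 + 1)"
    proof -
      have "(4 + t^2) * (4 * t^2 + 1) - ((2 - t) * (1 - 2 * t))^2 = 4 * t * (4 * t^2 + (t - 2)^2 + 1)"
        by (simp add: power2_eq_square algebra_simps)
      also have "\<dots> \<ge> 0" using assms by simp
      finally show ?thesis by simp
    qed
    then show ?thesis
      using \<open>u > 0\<close> \<open>v > 0\<close> by (simp add: c_def power_divide power_mult_distrib \<open>u^2 = _\<close> \<open>v^2 = _\<close> divide_le_eq_1 add_pos_nonneg add_nonneg_pos)
  qed
  moreover have "a \<ge> 0" "b \<ge> 0" using \<open>u > 0\<close> \<open>v > 0\<close> assms by (simp_all add: a_def b_def)
  ultimately have bounds: "0 \<le> a" "a \<le> 1" "0 \<le> b" "b \<le> 1" "-1 \<le> c" "c \<le> 1"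
    by (auto simp: abs_square_le_1 abs_le_iff)
  have "1 - a^2 = (u^2 - 2) / u^2" "1 - b^2 = (v^2 - 2 * t^2) / v^2"
    using \<open>u > 0\<close> \<open>v > 0\<close> by (simp_all add: a2 b2 field_simps)
  moreover have "u^2 - 2 = 2 + t^2" "v^2 - 2 * t^2 = 2 * t^2 + 1"
    using \<open>u^2 = _\<close> \<open>v^2 = _\<close> by simp_all
  ultimately have sqrt_a: "sqrt (1 - a^2) = sqrt (2 + t^2) / u"
    and sqrt_b: "sqrt (1 - b^2) = sqrt (2 * t^2 + 1) / v"
    using \<open>u > 0\<close> \<open>v > 0\<close> by (simp_all add: real_sqrt_divide u_def v_def)
  have expr: "sqrt (1 - a^2) * sqrt (1 - b^2) - a * b - c
      = (sqrt (2 + t^2) * sqrt (2 * t^2 + 1) - (2 * t^2 - 3 * t + 2)) / (u * v)"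
    unfolding sqrt_a sqrt_b using \<open>u > 0\<close> \<open>v > 0\<close>
    by (simp add: a_def b_def c_def field_simps power2_eq_square)
  have sgn_num: "sgn (sqrt (2 + t^2) * sqrt (2 * t^2 + 1) - (2 * t^2 - 3 * t + 2)) = - sgn (angle_excess_poly t)"
  proof -
    have "2 * t^2 - 3 * t + 2 = 2 * (t - 3/4)^2 + 7/8" by (simp add: power2_eq_square algebra_simps)
    then have "2 * t^2 - 3 * t + 2 > 0" using zero_le_power2[of "t - 3/4"] by linarith
    then have "sgn (sqrt (2 + t^2) * sqrt (2 * t^2 + 1) - (2 * t^2 - 3 * t + 2))
        = sgn ((2 + t^2) * (2 * t^2 + 1) - (2 * t^2 - 3 * t + 2)^2)"
      unfolding real_sqrt_mult[symmetric] by (intro sgn_sqrt_diff) simp_all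
    also have "(2 + t^2) * (2 * t^2 + 1) - (2 * t^2 - 3 * t + 2)^2 = - 2 * angle_excess_poly t"
      by (simp add: angle_excess_poly_def power2_eq_square power3_eq_cube power4_eq_xxxx algebra_simps)
    finally show ?thesis by (simp add: sgn_mult)
  qed
  show ?thesis
    using sgn_arccos_sum_minus_pi[OF bounds] \<open>u > 0\<close> \<open>v > 0\<close>
    by (simp add: expr sgn_num flip: a_def b_def c_def)
qed

section \<open>The triangles\<close>

lemma sol_inner_scaleR_left: "sol_inner p (c *\<^sub>R v) w = c * sol_inner p v w"
  and sol_inner_scaleR_right: "sol_inner p v (c *\<^sub>R w) = c * sol_inner p v w"
  by (cases p; cases v; cases w; simp add: sol_inner_def algebra_simps)+

lemma sol_angle_scaleR_left: "c > 0 \<Longrightarrow> sol_angle p (c *\<^sub>R v) w = sol_angle p v w"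
  and sol_angle_scaleR_right: "c > 0 \<Longrightarrow> sol_angle p v (c *\<^sub>R w) = sol_angle p v w"
  by (simp_all add: sol_angle_def sol_inner_scaleR_left sol_inner_scaleR_right real_sqrt_mult
      mult.assoc[symmetric] power2_eq_square[symmetric])

lemma sol_triangle_angles:
  fixes t :: real
  assumes "t > 0"
  shows "sol_angle (0, 0, 0) (1, 1, 0) (0, 2, t) = arccos (2 / (sqrt 2 * sqrt (4 + t^2)))"
    and "sol_angle (1, 1, 0) (- 2 * t, 0, - 1) (- 1, - 1, 0) = arccos (2 * t / (sqrt (4 * t^2 + 1) * sqrt 2))"
    and "sol_angle (0, 1, ln t / 2) (0, - 2 * t, 2 - t) (2, 0, 1 - 2 * t)
       = arccos ((2 - t) * (1 - 2 * t) / (sqrt (4 + t^2) * sqrt (4 * t^2 + 1)))"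
proof -
  show "sol_angle (0, 0, 0) (1, 1, 0) (0, 2, t) = arccos (2 / (sqrt 2 * sqrt (4 + t^2)))"
    by (simp add: sol_angle_def sol_inner_def power2_eq_square)
  show "sol_angle (1, 1, 0) (- 2 * t, 0, - 1) (- 1, - 1, 0) = arccos (2 * t / (sqrt (4 * t^2 + 1) * sqrt 2))"
    by (simp add: sol_angle_def sol_inner_def power2_eq_square)
  let ?C = "(0, 1, ln t / 2) :: R3" and ?v = "(0, - 2 * t, 2 - t) :: R3" and ?w = "(2, 0, 1 - 2 * t) :: R3"
  have "exp (- ln t) * (2 * t) * (2 * t) = 4 * t"
    using assms by (simp add: exp_minus field_simps power2_eq_square)
  then have "sol_inner ?C ?v ?v = 4 + t^2"
    by (simp add: sol_inner_def power2_eq_square algebra_simps)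
  moreover have "sol_inner ?C ?w ?w = 4 * t^2 + 1"
    using assms by (simp add: sol_inner_def power2_eq_square algebra_simps)
  moreover have "sol_inner ?C ?v ?w = (2 - t) * (1 - 2 * t)"
    by (simp add: sol_inner_def)
  ultimately show "sol_angle ?C ?v ?w = arccos ((2 - t) * (1 - 2 * t) / (sqrt (4 + t^2) * sqrt (4 * t^2 + 1)))"
    by (simp add: sol_angle_def)
qed

lemma sol_triangle_side_AB:
  obtains g where "sol_geodesic_on g 0 1" "g 0 = (0, 0, 0)" "g 1 = (1, 1, 0)"
    "side_tangent g 0 = (1, 1, 0)" "- side_tangent g 1 = (- 1, - 1, 0)"
proof -
  define g :: "real \<Rightarrow> R3" where "g s = (s, s, 0)" for s
  have dg: "(g has_vector_derivative (1, 1, 0)) (at s within S)" for s S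
    unfolding g_def by (rule has_vector_derivative_triple) (auto intro!: derivative_eq_intros)
  have "sol_geodesic_on g 0 1"
  proof (rule sol_geodesic_onI[where c' = "\<lambda>_. (1, 1, 0)" and c'' = "\<lambda>_. 0"])
    show "(g has_vector_derivative (1, 1, 0)) (at s)" for s using dg[of s UNIV] by simp
    show "0 = sol_geodesic_acc (g s) (1, 1, 0)" for s
      by (simp add: g_def sol_geodesic_acc_def zero_prod_def)
  qed simp_all
  then show thesis by (rule that) (simp_all add: g_def side_tangent_eqI[OF dg])
qed

lemma sol_triangle_side_BC:
  fixes t :: real
  assumes "t > 0"
  obtains g k where "sol_geodesic_on g 0 1" "g 0 = (1, 1, 0)" "g 1 = (0, 1, ln t / 2)" "k > 0"
    "side_tangent g 0 = k *\<^sub>R (- 2 * t, 0, - 1)" "- side_tangent g 1 = k *\<^sub>R (2, 0, 1 - 2 * t)"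
proof -
  have exp_ln: "exp (- ln t) = 1 / t"
    using assms by (simp add: exp_minus inverse_eq_divide)
  have "(1 - (1 - 1 / (2 * t)))^2 + exp (-2 * 0) = (0 - (1 - 1 / (2 * t)))^2 + exp (-2 * (ln t / 2))"
    using assms by (simp add: exp_ln field_simps power2_eq_square)
  then obtain g k where g: "sol_geodesic_on g 0 1" "g 0 = (1, 1, 0)" "g 1 = (0, 1, ln t / 2)" "k > 0"
    "side_tangent g 0 = k *\<^sub>R ((0 - 1) * exp (-2 * 0), 0, (0 - 1) * (1 - (1 - 1 / (2 * t))))"
    "side_tangent g 1 = k *\<^sub>R ((0 - 1) * exp (-2 * (ln t / 2)), 0, (0 - 1) * (0 - (1 - 1 / (2 * t))))"
    using sol_geodesic_through_xz[of 1 0 "1 - 1 / (2 * t)" 0 "ln t / 2" 1] by auto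
  show thesis
  proof (rule that[OF g(1-3)])
    show "k / (2 * t) > 0" using assms g(4) by simp
    show "side_tangent g 0 = (k / (2 * t)) *\<^sub>R (- 2 * t, 0, - 1)"
      and "- side_tangent g 1 = (k / (2 * t)) *\<^sub>R (2, 0, 1 - 2 * t)"
      using assms by (simp_all add: g(5,6) exp_ln field_simps)
  qed
qed

lemma sol_triangle_side_CA:
  fixes t :: real
  assumes "t > 0"
  obtains g k where "sol_geodesic_on g 0 1" "g 0 = (0, 1, ln t / 2)" "g 1 = (0, 0, 0)" "k > 0"
    "side_tangent g 0 = k *\<^sub>R (0, - 2 * t, 2 - t)" "- side_tangent g 1 = k *\<^sub>R (0, 2, t)"
proof -
  have exp_ln: "exp (ln t) = t"
    using assms by simp
  have "(1 - t / 2)^2 + exp (2 * (ln t / 2)) = (0 - t / 2)^2 + exp (2 * 0)"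
    using assms by (simp add: exp_ln field_simps power2_eq_square)
  then obtain g k where g: "sol_geodesic_on g 0 1" "g 0 = (0, 1, ln t / 2)" "g 1 = (0, 0, 0)" "k > 0"
    "side_tangent g 0 = k *\<^sub>R (0, (0 - 1) * exp (2 * (ln t / 2)), (0 - 1) * (t / 2 - 1))"
    "side_tangent g 1 = k *\<^sub>R (0, (0 - 1) * exp (2 * 0), (0 - 1) * (t / 2 - 0))"
    using sol_geodesic_through_yz[of 1 0 "t / 2" "ln t / 2" 0 0] by auto
  show thesis
  proof (rule that[OF g(1-3)])
    show "k / 2 > 0" using g(4) by simp
    show "side_tangent g 0 = (k / 2) *\<^sub>R (0, - 2 * t, 2 - t)"
      and "- side_tangent g 1 = (k / 2) *\<^sub>R (0, 2, t)"
      using assms by (simp_all add: g(5,6) exp_ln field_simps)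
  qed
qed

lemma sol_triangle_angle_sum_sgn:
  fixes t :: real
  assumes "t > 0"
  shows "\<exists>A B C g1 g2 g3. sol_geodesic_triangle A B C g1 g2 g3 \<and>
           sgn (sol_angle_sum A B C g1 g2 g3 - pi) = - sgn (angle_excess_poly t)"
proof -
  obtain g1 where g1: "sol_geodesic_on g1 0 1" "g1 0 = (0, 0, 0)" "g1 1 = (1, 1, 0)"
    "side_tangent g1 0 = (1, 1, 0)" "- side_tangent g1 1 = (- 1, - 1, 0)"
    by (rule sol_triangle_side_AB)
  obtain g2 k2 where g2: "sol_geodesic_on g2 0 1" "g2 0 = (1, 1, 0)" "g2 1 = (0, 1, ln t / 2)" "k2 > 0"
    "side_tangent g2 0 = k2 *\<^sub>R (- 2 * t, 0, - 1)" "- side_tangent g2 1 = k2 *\<^sub>R (2, 0, 1 - 2 * t)"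
    using sol_triangle_side_BC[OF assms] by blast
  obtain g3 k3 where g3: "sol_geodesic_on g3 0 1" "g3 0 = (0, 1, ln t / 2)" "g3 1 = (0, 0, 0)" "k3 > 0"
    "side_tangent g3 0 = k3 *\<^sub>R (0, - 2 * t, 2 - t)" "- side_tangent g3 1 = k3 *\<^sub>R (0, 2, t)"
    using sol_triangle_side_CA[OF assms] by blast
  have "sol_geodesic_triangle (0, 0, 0) (1, 1, 0) (0, 1, ln t / 2) g1 g2 g3"
    unfolding sol_geodesic_triangle_def
    using g1(1-3) g2(1-3) g3(1-3) not_sol_on_common_geodesic[of "(0, 0, 0)" "(0, 1, ln t / 2)" "(1, 1, 0)"]
    by simp
  moreover have "sol_angle_sum (0, 0, 0) (1, 1, 0) (0, 1, ln t / 2) g1 g2 g3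
      = arccos (2 / (sqrt 2 * sqrt (4 + t^2))) + arccos (2 * t / (sqrt (4 * t^2 + 1) * sqrt 2))
        + arccos ((2 - t) * (1 - 2 * t) / (sqrt (4 + t^2) * sqrt (4 * t^2 + 1)))"
    unfolding sol_angle_sum_def g1(4,5) g2(5,6) g3(5,6) using g2(4) g3(4)
    by (simp only: sol_angle_scaleR_left sol_angle_scaleR_right sol_triangle_angles[OF assms])
  ultimately show ?thesis
    using sgn_triangle_angle_sum[OF assms] by metis
qed

theorem theorem3p5:
  shows "(\<exists>A B C g1 g2 g3. sol_geodesic_triangle A B C g1 g2 g3 \<and> sol_angle_sum A B C g1 g2 g3 > pi)
       \<and> (\<exists>A B C g1 g2 g3. sol_geodesic_triangle A B C g1 g2 g3 \<and> sol_angle_sum A B C g1 g2 g3 < pi)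
       \<and> (\<exists>A B C g1 g2 g3. sol_geodesic_triangle A B C g1 g2 g3 \<and> sol_angle_sum A B C g1 g2 g3 = pi)"
proof -
  have triangle: "\<exists>A B C g1 g2 g3. sol_geodesic_triangle A B C g1 g2 g3 \<and> Q (sol_angle_sum A B C g1 g2 g3)"
    if "t > 0" and "\<And>S. sgn (S - pi) = - sgn (angle_excess_poly t) \<Longrightarrow> Q S" for t Q
    using sol_triangle_angle_sum_sgn[OF that(1)] that(2) by blast
  have "angle_excess_poly 1 < 0" "angle_excess_poly 6 > 0"
    by (simp_all add: angle_excess_poly_def)
  moreover have "continuous_on {1..6} angle_excess_poly"
    unfolding angle_excess_poly_def by (intro continuous_intros)
  ultimately obtain t0 where "1 \<le> t0" "angle_excess_poly t0 = 0"
    using IVT'[of angle_excess_poly 1 0 6] by auto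
  with \<open>angle_excess_poly 1 < 0\<close> \<open>angle_excess_poly 6 > 0\<close> show ?thesis
    by (intro conjI triangle[of 1] triangle[of 6] triangle[of t0]) (auto simp: sgn_if split: if_splits)
qed

end
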